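(* For all primes $p$, all integers $m_1,m_2,k$ and all integers $r\ge1$, $$\binom{p^rm_1+p^rm_2-k-1}{p^rm_1}\equiv\binom{p^{r-1}m_1+p^{r-1}m_2-\lfloor k/p\rfloor-1}{p^{r-1}m_1}\pmod{p^r}.$$
   Context: For all integers $n, k$, the binomial coefficient is defined by $\binom{n}{k} = \lim_{z \to 0} \frac{\Gamma(z+n+1)}{\Gamma(z+k+1)\Gamma(z+n-k+1)}$; this is a finite integer for all $n,k\in\mathbb{Z}$, agrees with the usual one for $n\ge0$, and satisfies $\binom{n}{k}=\binom{n}{n-k}$. $\lfloor x\rfloor$ denotes the floor function. *)

theory Defs
  imports Complex_Main "HOL-Number_Theory.Cong"
begin

text \<open>Binomial coefficient for all integers n, k, defined as the limit
  lim_{z->0} Gamma(z+n+1) / (Gamma(z+k+1) Gamma(z+n-k+1)).\<close>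

definition gbinom :: "int \<Rightarrow> int \<Rightarrow> int" where
  "gbinom n k =
     (if 0 \<le> n then (if 0 \<le> k \<and> k \<le> n then int (nat n choose nat k) else 0)
      else if 0 \<le> k then (-1) ^ nat k * int (nat (k - n - 1) choose nat k)
      else if k \<le> n then (-1) ^ nat (n - k) * int (nat (- k - 1) choose nat (n - k))
      else 0)"

end

theory Submission
  imports Defs "HOL-Computational_Algebra.Primes"
begin

text \<open>Write the upper argument as \<open>p A + s\<close> with \<open>0 \<le> s < p\<close>. Using the symmetry
  \<open>gbinom n k = gbinom n (n - k)\<close> to trade a negative lower index for a nonnegative one, both
  binomials become falling factorials divided by factorials. Among the \<open>j = p t + u\<close> factors of
  \<open>(p A + s)(p A + s - 1)\<cdots>\<close>, where \<open>u \<le> s\<close>, the multiples of \<open>p\<close> multiply to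
  \<open>p^t A(A - 1)\<cdots>(A - t + 1)\<close>, and those of \<open>j!\<close> to \<open>p^t t!\<close>. Cancelling \<open>p^t t!\<close> leaves a
  congruence modulo \<open>p^r\<close> between the products of the factors prime to \<open>p\<close> of two falling
  factorials of length \<open>j\<close>. These products are units mod \<open>p^r\<close>, and they agree: either the
  starting points are congruent mod \<open>p^r\<close>, or \<open>p^r\<close> divides \<open>j\<close> and shifting the start by one
  exchanges a single factor for a congruent one.\<close>

definition falling_coprime_part :: "int \<Rightarrow> int \<Rightarrow> nat \<Rightarrow> int" where
  "falling_coprime_part p c j = (\<Prod>i = 0..<j. if p dvd c - int i then 1 else c - int i)"

lemma falling_prod_split:
  "(\<Prod>i = 0..<j. c - int i) =
     (\<Prod>i = 0..<j. if p dvd c - int i then c - int i else 1) * falling_coprime_part p c j"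
  unfolding falling_coprime_part_def prod.distrib[symmetric] by (rule prod.cong) auto

lemma diff1_div_eq:
  fixes p x :: int
  assumes "p > 0"
  shows "(x - 1) div p = (if p dvd x then x div p - 1 else x div p)"
proof -
  have "(x - 1) div p = (x mod p - 1 + x div p * p) div p"
    using mod_div_mult_eq[of x p] by (simp add: algebra_simps)
  also have "\<dots> = (x mod p - 1) div p + x div p"
    using assms by simp
  also have "(x mod p - 1) div p = (if p dvd x then -1 else 0)"
  proof (cases "p dvd x")
    case False
    moreover have "0 \<le> x mod p" and "x mod p < p"
      using assms by simp_all
    ultimately have "0 \<le> x mod p - 1" and "x mod p - 1 < p"
      by (auto simp: dvd_eq_mod_eq_0)
    then show ?thesis using False by (simp add: div_pos_pos_trivial)
  qed (use assms in \<open>simp add: div_eq_minus1\<close>)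
  finally show ?thesis by simp
qed

lemma falling_prod_multiples:
  fixes p c :: int
  assumes "p > 0"
  defines "n \<equiv> \<lambda>j. nat (c div p - (c - int j) div p)"
  shows "(\<Prod>i = 0..<j. if p dvd c - int i then c - int i else 1) =
           p ^ n j * (\<Prod>l = 0..<n j. c div p - int l)"
proof (induction j)
  case 0
  then show ?case by (simp add: n_def)
next
  case (Suc j)
  have le: "(c - int j) div p \<le> c div p" using assms by (simp add: zdiv_mono1)
  have div_Suc: "(c - int (Suc j)) div p =
      (if p dvd c - int j then (c - int j) div p - 1 else (c - int j) div p)"
    using diff1_div_eq[OF assms(1), of "c - int j"] by (simp add: algebra_simps)
  show ?case
  proof (cases "p dvd c - int j")
    case True
    then have "n (Suc j) = Suc (n j)" and "c - int j = p * (c div p - int (n j))"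
      using le div_Suc by (auto simp: n_def)
    then show ?thesis using Suc.IH True by simp
  next
    case False
    then show ?thesis using Suc.IH div_Suc by (simp add: n_def)
  qed
qed

lemma coprime_falling_coprime_part:
  assumes "prime p"
  shows "coprime (falling_coprime_part p c j) (p ^ r)"
  unfolding falling_coprime_part_def
  by (rule prod_coprime_left) (use assms prime_imp_coprime in \<open>auto simp: coprime_commute\<close>)

lemma falling_coprime_part_cong:
  assumes "p dvd q" and "[c = c'] (mod q)"
  shows "[falling_coprime_part p c j = falling_coprime_part p c' j] (mod q)"
proof -
  have "p dvd c - int i \<longleftrightarrow> p dvd c' - int i" for i
    using cong_dvd_iff[OF cong_dvd_modulus[OF cong_diff[OF assms(2) cong_refl] assms(1)]] .
  then show ?thesis
    unfolding falling_coprime_part_def using assms(2)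
    by (intro cong_prod) (auto intro: cong_diff)
qed

lemma falling_coprime_part_shift:
  assumes "p dvd q" and "q dvd int L"
  shows "[falling_coprime_part p (c + 1) L = falling_coprime_part p c L] (mod q)"
proof (cases L)
  case 0
  then show ?thesis by (simp add: falling_coprime_part_def)
next
  case (Suc M)
  define f where "f x = (if p dvd x then 1 else x)" for x
  have fcp: "falling_coprime_part p c' L = (\<Prod>i = 0..<L. f (c' - int i))" for c'
    by (simp add: falling_coprime_part_def f_def)
  have "falling_coprime_part p (c + 1) L = f (c + 1) * (\<Prod>i = 0..<M. f (c - int i))"
    unfolding fcp unfolding Suc prod.atLeast0_lessThan_Suc_shift by (simp add: algebra_simps)
  moreover have "falling_coprime_part p c L = f (c + 1 - int L) * (\<Prod>i = 0..<M. f (c - int i))"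
    unfolding fcp unfolding Suc prod.atLeast0_lessThan_Suc by (simp add: algebra_simps)
  moreover have "[f (c + 1) = f (c + 1 - int L)] (mod q)"
  proof -
    have cong: "[c + 1 = c + 1 - int L] (mod q)"
      using assms(2) by (simp add: cong_iff_dvd_diff)
    then have "p dvd c + 1 \<longleftrightarrow> p dvd c + 1 - int L"
      by (rule cong_dvd_iff[OF cong_dvd_modulus[OF _ assms(1)]])
    then show ?thesis using cong by (simp add: f_def)
  qed
  ultimately show ?thesis by (simp add: cong_scalar_right)
qed

lemma falling_coprime_part_periodic:
  assumes "p dvd q" and "q dvd int L"
  shows "[falling_coprime_part p c L = falling_coprime_part p c' L] (mod q)"
proof -
  have "[falling_coprime_part p c L = falling_coprime_part p 0 L] (mod q)" for c
  proof (induction c rule: int_induct[of _ 0])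
    case (step1 i)
    then show ?case
      using falling_coprime_part_shift[OF assms, of i] by (metis cong_trans)
  next
    case (step2 i)
    then show ?case
      using falling_coprime_part_shift[OF assms, of "i - 1"] by (metis cong_sym cong_trans diff_add_cancel)
  qed simp
  then show ?thesis by (metis cong_sym cong_trans)
qed

lemma gbinom_symmetric: "gbinom n k = gbinom n (n - k)"
proof -
  consider "0 \<le> n" | "n < 0" "0 \<le> k" | "n < 0" "k \<le> n" | "n < k" "k < 0"
    by linarith
  then show ?thesis
  proof cases
    case 1
    then show ?thesis
      using binomial_symmetric[of "nat k" "nat n"] by (auto simp: gbinom_def nat_diff_distrib)
  qed (simp_all add: gbinom_def)
qed

lemma of_int_gbinom:
  assumes "0 \<le> k"
  shows "real_of_int (gbinom n k) = real_of_int n gchoose nat k"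
proof (cases "0 \<le> n")
  case True
  then show ?thesis
    using assms binomial_gbinomial[of "nat n" "nat k", where 'a = real, symmetric]
    by (simp add: gbinom_def binomial_eq_0)
next
  case False
  have "real_of_int n gchoose nat k = (-1) ^ nat k * (real (nat k) - real_of_int n - 1 gchoose nat k)"
    by (rule gbinomial_negated_upper)
  also have "real (nat k) - real_of_int n - 1 = real (nat (k - n - 1))"
    using assms False by simp
  finally show ?thesis
    using assms False by (simp add: gbinom_def binomial_gbinomial)
qed

lemma gbinom_self: "0 \<le> n \<Longrightarrow> gbinom n n = 1"
  by (simp add: gbinom_def)

lemma fact_mult_gbinom: "fact j * gbinom n (int j) = (\<Prod>i = 0..<j. n - int i)"
proof -
  have "real_of_int (fact j * gbinom n (int j)) = fact j * (real_of_int n gchoose j)"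
    by (simp add: of_int_gbinom)
  also have "\<dots> = real_of_int (\<Prod>i = 0..<j. n - int i)"
    by (simp add: gbinomial_mult_fact)
  finally show ?thesis by (simp only: of_int_eq_iff)
qed

lemma gbinom_cong_div_prime:
  fixes p A s u :: int and j t :: nat
  assumes p: "prime p" and s: "0 \<le> s" "s < p" and u: "0 \<le> u" "u \<le> s"
    and j: "int j = p * int t + u"
    and coprime_parts: "[falling_coprime_part p (p * A + s) j = falling_coprime_part p (int j) j] (mod p ^ r)"
  shows "[gbinom (p * A + s) (int j) = gbinom A (int t)] (mod p ^ r)"
proof -
  define N where "N = p * A + s"
  define U where "U c = falling_coprime_part p c j" for c
  have p0: "p > 0" using p by (simp add: prime_gt_0_int)
  have diff_eq: "N - int j = (s - u) + (A - int t) * p" and j_eq: "int j = u + int t * p"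
    by (simp_all add: N_def j algebra_simps)
  have "(N - int j) div p = A - int t"
    unfolding diff_eq using s u p0 by (simp add: div_pos_pos_trivial)
  moreover have "int j div p = int t"
    unfolding j_eq using s u p0 by (simp add: div_pos_pos_trivial)
  moreover have "N div p = A"
    using s p0 by (simp add: N_def)
  ultimately have multiples_N: "(\<Prod>i = 0..<j. if p dvd N - int i then N - int i else 1) =
      p ^ t * (\<Prod>l = 0..<t. A - int l)"
    and multiples_j: "(\<Prod>i = 0..<j. if p dvd int j - int i then int j - int i else 1) =
      p ^ t * fact t"
    using falling_prod_multiples[OF p0, where c = N] falling_prod_multiples[OF p0, where c = "int j"]
      fact_mult_gbinom[of t "int t"] by (simp_all add: gbinom_self)
  have "fact j = p ^ t * fact t * U (int j)"
    using falling_prod_split[where c = "int j" and p = p] fact_mult_gbinom[of j "int j"] multiples_j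
    by (simp add: U_def gbinom_self)
  moreover have "fact j * gbinom N (int j) = p ^ t * fact t * gbinom A (int t) * U N"
    using falling_prod_split[where c = N and p = p] fact_mult_gbinom[of j N] multiples_N fact_mult_gbinom[of t A]
    by (simp add: U_def ac_simps)
  ultimately have "U (int j) * gbinom N (int j) = gbinom A (int t) * U N"
    using p0 by (simp add: ac_simps)
  moreover have "[gbinom A (int t) * U N = gbinom A (int t) * U (int j)] (mod p ^ r)"
    using coprime_parts by (simp add: U_def N_def cong_scalar_left)
  ultimately have "[U (int j) * gbinom N (int j) = U (int j) * gbinom A (int t)] (mod p ^ r)"
    by (simp add: ac_simps)
  then show ?thesis
    using coprime_falling_coprime_part[OF p] by (simp add: U_def N_def cong_mult_lcancel)
qed

lemma gbinom_prime_mult_cong: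
  fixes p A B s :: int
  assumes p: "prime p" and s: "0 \<le> s" "s < p" and dvd_B: "p ^ r dvd p * B"
  shows "[gbinom (p * A + s) (p * B) = gbinom A B] (mod p ^ r)"
proof (cases "r = 0")
  case False
  define N where "N = p * A + s"
  have p0: "p > 0" using p by (simp add: prime_gt_0_int)
  have p_dvd: "p dvd p ^ r" using False by (simp add: dvd_power)
  consider "0 \<le> B" | "B < 0" "N < p * B" | "B < 0" "p * B \<le> N"
    by linarith
  then show ?thesis
  proof cases
    case 1
    define j where "j = nat (p * B)"
    have j: "int j = p * int (nat B) + 0"
      using 1 p0 by (simp add: j_def)
    have "[falling_coprime_part p N j = falling_coprime_part p (int j) j] (mod p ^ r)"
      using dvd_B 1 p0 by (intro falling_coprime_part_periodic[OF p_dvd]) (simp add: j_def)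
    then show ?thesis
      using gbinom_cong_div_prime[OF p s order_refl s(1) j] 1 p0 by (simp add: j_def N_def)
  next
    case 2
    then have "p * A < p * B"
      using s unfolding N_def by linarith
    then have "A < B"
      using p0 by simp
    moreover have "p * B < 0"
      using 2 p0 by (simp add: mult_pos_neg)
    ultimately show ?thesis
      using 2 unfolding N_def[symmetric] by (simp add: gbinom_def)
  next
    case 3
    then have "p * B < p * (A + 1)"
      using s unfolding N_def by (simp add: algebra_simps)
    then have "B \<le> A"
      using p0 by simp
    define t where "t = nat (A - B)"
    define j where "j = nat (N - p * B)"
    have j: "int j = p * int t + s"
      using 3 \<open>B \<le> A\<close> s unfolding j_def t_def N_def by (simp add: algebra_simps)
    have "[N = int j] (mod p ^ r)"
      using dvd_B 3 by (simp add: j_def cong_iff_dvd_diff)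
    then have "[gbinom N (int j) = gbinom A (int t)] (mod p ^ r)"
      using gbinom_cong_div_prime[OF p s s(1) order_refl j] falling_coprime_part_cong[OF p_dvd]
      unfolding N_def by blast
    moreover have "gbinom N (int j) = gbinom N (p * B)" and "gbinom A (int t) = gbinom A B"
      using 3 \<open>B \<le> A\<close> gbinom_symmetric by (simp_all add: j_def t_def)
    ultimately show ?thesis by (simp add: N_def)
  qed
qed simp

theorem lemma5p5:
  fixes p r :: nat and m1 m2 k :: int
  assumes "prime p" and "r \<ge> 1"
  shows "[gbinom (int p ^ r * m1 + int p ^ r * m2 - k - 1) (int p ^ r * m1)
          = gbinom (int p ^ (r - 1) * m1 + int p ^ (r - 1) * m2 - \<lfloor>real_of_int k / real p\<rfloor> - 1)
                   (int p ^ (r - 1) * m1)] (mod int p ^ r)"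
proof -
  define Q where "Q = int p ^ (r - 1)"
  define A where "A = Q * m1 + Q * m2 - k div int p - 1"
  define s where "s = int p - 1 - k mod int p"
  have p: "prime (int p)" and p0: "int p > 0"
    using assms(1) by (simp_all add: prime_gt_0_nat)
  have pow: "int p ^ r = int p * Q"
    using assms(2) unfolding Q_def by (simp add: power_eq_if)
  have "\<lfloor>real_of_int k / real p\<rfloor> = k div int p"
    using floor_divide_of_int_eq[of k "int p"] by simp
  moreover have "int p ^ r * m1 + int p ^ r * m2 - k - 1 = int p * A + s"
    unfolding pow A_def s_def by (simp add: algebra_simps minus_mod_eq_mult_div[symmetric])
  moreover have "0 \<le> s" "s < int p"
    using p0 pos_mod_bound[of "int p" k] pos_mod_sign[of "int p" k] unfolding s_def by linarith+
  ultimately show ?thesis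
    using gbinom_prime_mult_cong[OF p, where A = A and B = "Q * m1" and r = r] unfolding pow Q_def A_def
    by (simp add: mult.assoc)
qed

end
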